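(* Let \[ I_{-1}:=\iint_T\frac{dx\,dy}{xy(-\ln xy)}. \] Then \[ I_{-1}=\int_0^\infty\left(1-\frac{1}{\binom{2t}{t}}\right)\frac{dt}{t^2}=\int_0^1\ln\!\left(1+\frac{\ln(1-x)}{\ln x}\right)\frac{dx}{x}. \]
   Context: $T:=\{(x,y)\in[0,1]^2 : x+y\ge 1\}$. The generalized binomial coefficient is $\binom{s}{t}:=\frac{\Gamma(s+1)}{\Gamma(t+1)\Gamma(s-t+1)}$. *)

theory Defs
  imports "HOL-Analysis.Analysis"
begin

definition regionT :: "(real \<times> real) set" where
  "regionT = {(x, y). 0 \<le> x \<and> x \<le> 1 \<and> 0 \<le> y \<and> y \<le> 1 \<and> x + y \<ge> 1}"

definition gen_binom :: "real \<Rightarrow> real \<Rightarrow> real" where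
  "gen_binom s t = Gamma (s + 1) / (Gamma (t + 1) * Gamma (s - t + 1))"

definition Im1_integrand :: "real \<times> real \<Rightarrow> real" where
  "Im1_integrand p = 1 / (fst p * snd p * (- ln (fst p * snd p)))"

end

theory Submission
  imports Defs "HOL-Real_Asymp.Real_Asymp"
begin

(*
  All three integrals in the theorem have nonnegative integrands, so it suffices to show that
  their Lebesgue (nonnegative) integrals coincide and that one of them is finite.

  - For 0 < c < 1 we have 1 / (c (-ln c)) = \<integral>_0^\<infinity> c^(s-1) ds.  Substituting this into
    I_{-1} and exchanging the order of integration (Tonelli) gives
    I_{-1} = \<integral>_0^\<infinity> \<integral>\<integral>_T (xy)^(s-1) dx dy ds.
  - Slicing T along x, the inner double integral equals \<integral>_0^1 x^(s-1) (1 - (1-x)^s) / s dx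
    = (B(s,1) - B(s,s+1)) / s = (1 - 1/binom(2s,s)) / s^2.
  - Slicing T along x directly in I_{-1}, the inner integral over y \<in> [1-x,1] has the explicit
    antiderivative -ln(-ln(xy))/x, which yields the logarithmic integrand of the third integral.
  - The logarithmic integrand is bounded by 8 / sqrt(1-x), hence integrable on (0,1).
*)

definition binom_integrand :: "real \<Rightarrow> real" where
  "binom_integrand t = (1 - 1 / gen_binom (2 * t) t) / t\<^sup>2"

definition log_integrand :: "real \<Rightarrow> real" where
  "log_integrand x = ln (1 + ln (1 - x) / ln x) / x"

text \<open>Measurability of the region and of the integrand of \<open>I_{-1}\<close>, stated for the product
  measure \<open>lborel \<Otimes> lborel\<close> (equal to \<open>lborel\<close> on pairs by \<open>lborel_prod\<close>), where the
  measurability prover can decompose pairs.\<close>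

lemma regionT_sets [measurable]: "regionT \<in> sets (lborel \<Otimes>\<^sub>M lborel)"
proof -
  have "regionT = {p \<in> space (lborel \<Otimes>\<^sub>M lborel).
          0 \<le> fst p \<and> fst p \<le> 1 \<and> 0 \<le> snd p \<and> snd p \<le> 1 \<and> fst p + snd p \<ge> (1::real)}"
    by (auto simp: regionT_def space_pair_measure)
  also have "\<dots> \<in> sets (lborel \<Otimes>\<^sub>M lborel)"
    by measurable
  finally show ?thesis .
qed

lemma Im1_integrand_measurable [measurable]: "Im1_integrand \<in> borel_measurable (lborel \<Otimes>\<^sub>M lborel)"
  unfolding Im1_integrand_def by measurable

lemma Im1_integrand_nonneg:
  assumes "p \<in> regionT"
  shows "0 \<le> Im1_integrand p"
proof -
  obtain x y where p: "p = (x, y)" and xy: "0 \<le> x" "x \<le> 1" "0 \<le> y" "y \<le> 1"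
    using assms by (cases p) (auto simp: regionT_def)
  have "x * y \<le> 1"
    using xy by (simp add: mult_le_one)
  then have "ln (x * y) \<le> 0"
    using xy by (cases "x * y = 0") auto
  then have "0 \<le> x * y * (- ln (x * y))"
    using xy by (intro mult_nonneg_nonneg) auto
  then show ?thesis
    using xy by (simp add: p Im1_integrand_def)
qed

lemma nn_integral_regionT:
  fixes h :: "real \<times> real \<Rightarrow> ennreal"
  assumes [measurable]: "h \<in> borel_measurable (lborel \<Otimes>\<^sub>M lborel)"
  shows "(\<integral>\<^sup>+p. h p * indicator regionT p \<partial>lborel)
       = (\<integral>\<^sup>+x. (\<integral>\<^sup>+y. h (x, y) * indicator {1 - x..1} y \<partial>lborel) * indicator {0<..<1} x \<partial>lborel)"
proof -
  have meas: "(\<lambda>p. h p * indicator regionT p) \<in> borel_measurable (lborel \<Otimes>\<^sub>M lborel)"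
    by measurable
  have "(\<integral>\<^sup>+p. h p * indicator regionT p \<partial>lborel)
      = (\<integral>\<^sup>+x. \<integral>\<^sup>+y. h (x, y) * indicator regionT (x, y) \<partial>lborel \<partial>lborel)"
    using lborel.nn_integral_fst[OF meas] by (simp add: lborel_prod)
  also have "\<dots> = (\<integral>\<^sup>+x. (\<integral>\<^sup>+y. h (x, y) * indicator {1 - x..1} y \<partial>lborel) * indicator {0<..<1} x \<partial>lborel)"
  proof (intro nn_integral_cong_AE eventually_mono[OF eventually_conj[OF
          AE_lborel_singleton[of 0] AE_lborel_singleton[of 1]]])
    fix x :: real
    assume "x \<noteq> 0 \<and> x \<noteq> 1"
    then consider "0 < x \<and> x < 1" | "x < 0 \<or> 1 < x"
      by linarith
    then show "(\<integral>\<^sup>+y. h (x, y) * indicator regionT (x, y) \<partial>lborel)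
             = (\<integral>\<^sup>+y. h (x, y) * indicator {1 - x..1} y \<partial>lborel) * indicator {0<..<1} x"
    proof cases
      case 1
      then have "indicator regionT (x, y) = (indicator {1 - x..1} y :: ennreal)" for y
        by (auto simp: regionT_def indicator_def)
      then show ?thesis
        using 1 by simp
    next
      case 2
      then have "indicator regionT (x, y) = (0 :: ennreal)" for y
        by (auto simp: regionT_def indicator_def)
      then show ?thesis
        using 2 by (auto simp: indicator_def)
    qed
  qed
  finally show ?thesis .
qed

lemma nn_integral_powr_Ioi:
  fixes c :: real
  assumes c: "0 < c" "c < 1"
  shows "(\<integral>\<^sup>+s. ennreal (c powr (s - 1)) * indicator {0<..} s \<partial>lborel) = ennreal (1 / (c * - ln c))"
proof -
  have ln_c: "ln c < 0"
    using c by simp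
  have "(\<integral>\<^sup>+s. ennreal (c powr (s - 1)) * indicator {0..} s \<partial>lborel) = ennreal (0 - c powr 0 / (c * ln c))"
  proof (rule nn_integral_FTC_atLeast)
    fix s :: real
    show "DERIV (\<lambda>s. c powr s / (c * ln c)) s :> c powr (s - 1)"
      using c ln_c by (auto intro!: derivative_eq_intros simp: powr_diff field_simps)
    have "((\<lambda>s. c powr s) \<longlongrightarrow> 0) at_top"
      using c by real_asymp
    then show "((\<lambda>s. c powr s / (c * ln c)) \<longlongrightarrow> 0) at_top"
      by (rule tendsto_divide_zero)
  qed auto
  also have "(\<integral>\<^sup>+s. ennreal (c powr (s - 1)) * indicator {0..} s \<partial>lborel)
           = (\<integral>\<^sup>+s. ennreal (c powr (s - 1)) * indicator {0<..} s \<partial>lborel)"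
    by (intro nn_integral_cong_AE eventually_mono[OF AE_lborel_singleton[of 0]])
       (auto simp: indicator_def)
  finally show ?thesis
    using c by simp
qed

text \<open>Pointwise on \<open>T\<close> (away from the single point \<open>(1, 1)\<close>, where \<open>xy = 1\<close>) the integrand of
  \<open>I_{-1}\<close> is the integral of \<open>(xy)^(s-1)\<close> over \<open>s > 0\<close>; where \<open>xy = 0\<close> both sides vanish.\<close>

lemma Im1_integrand_as_integral:
  assumes "p \<in> regionT" "p \<noteq> (1, 1)"
  shows "ennreal (Im1_integrand p)
       = (\<integral>\<^sup>+s. ennreal ((fst p * snd p) powr (s - 1)) * indicator {0<..} s \<partial>lborel)"
proof -
  obtain x y where p: "p = (x, y)" and xy: "0 \<le> x" "x \<le> 1" "0 \<le> y" "y \<le> 1"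
    using assms(1) by (cases p) (auto simp: regionT_def)
  show ?thesis
  proof (cases "x * y = 0")
    case zero: True
    then show ?thesis
      by (auto simp: p Im1_integrand_def)
  next
    case False
    then have "0 < x * y"
      using xy by (simp add: less_le)
    moreover have "x * y < 1"
    proof -
      have "x < 1 \<or> y < 1"
        using assms(2) xy p by auto
      moreover have "x * y \<le> x" "x * y \<le> y"
        using xy by (simp_all add: mult_left_le mult_left_le_one_le)
      ultimately show ?thesis
        by linarith
    qed
    ultimately show ?thesis
      using nn_integral_powr_Ioi[of "x * y"] by (simp add: p Im1_integrand_def)
  qed
qed

lemma slice_integral_powr:
  fixes x s :: real
  assumes x: "0 < x" "x < 1" and s: "0 < s"
  shows "(\<integral>\<^sup>+y. ennreal ((x * y) powr (s - 1)) * indicator {1 - x..1} y \<partial>lborel)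
       = ennreal (x powr (s - 1) * (1 - (1 - x) powr s) / s)"
proof -
  define F where "F y = x powr (s - 1) * y powr s / s" for y
  have "(\<integral>\<^sup>+y. ennreal ((x * y) powr (s - 1)) * indicator {1 - x..1} y \<partial>lborel) = ennreal (F 1 - F (1 - x))"
  proof (rule nn_integral_FTC_Icc)
    fix y
    assume "y \<in> {1 - x..1}"
    then have y: "0 < y"
      using x by auto
    have "DERIV F y :> x powr (s - 1) * (s * y powr (s - 1)) / s"
      unfolding F_def using y s by (auto intro!: derivative_eq_intros)
    then show "DERIV F y :> (x * y) powr (s - 1)"
      using x y s by (simp add: powr_mult)
  qed (use x in auto)
  also have "F 1 - F (1 - x) = x powr (s - 1) * (1 - (1 - x) powr s) / s"
    unfolding F_def by (simp add: diff_divide_distrib right_diff_distrib)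
  finally show ?thesis .
qed

text \<open>Slice integral for the first representation: \<open>\<integral>_{1-x}^1 dy / (xy (-ln xy))\<close>, computed with the
  antiderivative \<open>-ln(-ln x - ln y) / x\<close>.\<close>

lemma slice_integral_Im1:
  fixes x :: real
  assumes x: "0 < x" "x < 1"
  shows "(\<integral>\<^sup>+y. ennreal (Im1_integrand (x, y)) * indicator {1 - x..1} y \<partial>lborel)
       = ennreal (log_integrand x)"
proof -
  have ln_x: "ln x < 0" and ln_1x: "ln (1 - x) < 0"
    using x by simp_all
  define F where "F y = - ln (- ln x - ln y) / x" for y
  have "(\<integral>\<^sup>+y. ennreal (Im1_integrand (x, y)) * indicator {1 - x..1} y \<partial>lborel) = ennreal (F 1 - F (1 - x))"
  proof (rule nn_integral_FTC_Icc)
    show "(\<lambda>y. Im1_integrand (x, y)) \<in> borel_measurable borel"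
      by measurable
    fix y
    assume "y \<in> {1 - x..1}"
    then have y: "0 < y" "y \<le> 1"
      using x by auto
    then have "ln y \<le> 0"
      by simp
    then have pos: "- ln x - ln y > 0"
      using ln_x by simp
    have "DERIV F y :> (1 / y) / (- ln x - ln y) / x"
      unfolding F_def using x y pos by (auto intro!: derivative_eq_intros)
    then show "DERIV F y :> Im1_integrand (x, y)"
      using x y pos by (simp add: Im1_integrand_def ln_mult ac_simps)
    show "0 \<le> Im1_integrand (x, y)"
      using x y pos by (simp add: Im1_integrand_def ln_mult)
  qed (use x in auto)
  also have "F 1 - F (1 - x) = log_integrand x"
  proof -
    have "1 + ln (1 - x) / ln x = (- ln x - ln (1 - x)) / (- ln x)"
      using ln_x by (simp add: field_simps)
    moreover have "ln ((- ln x - ln (1 - x)) / (- ln x)) = ln (- ln x - ln (1 - x)) - ln (- ln x)"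
      using ln_x ln_1x by (intro ln_divide_pos) auto
    ultimately have "ln (1 + ln (1 - x) / ln x) = ln (- ln x - ln (1 - x)) - ln (- ln x)"
      by simp
    then show ?thesis
      unfolding F_def log_integrand_def by (simp add: diff_divide_distrib)
  qed
  finally show ?thesis .
qed

text \<open>The Beta-function evaluation of the \<open>x\<close>-integral:
  \<open>(B(s,1) - B(s,s+1)) / s = (1 - 1/binom(2s,s)) / s^2\<close>, using \<open>B(s,1) = 1/s\<close> and
  \<open>B(s,s+1) = \<Gamma>(s) \<Gamma>(s+1) / \<Gamma>(2s+1)\<close>.\<close>

lemma Beta_difference_eq_binom_integrand:
  fixes s :: real
  assumes s: "0 < s"
  shows "(Beta s 1 - Beta s (s + 1)) / s = binom_integrand s"
proof -
  have Gamma_s1: "Gamma (s + 1) = s * Gamma s"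
    using s by (intro Gamma_plus1) (auto dest: nonpos_Ints_nonpos)
  have nonzero: "Gamma (2 * s + 1) \<noteq> 0" "Gamma s \<noteq> 0"
    using s by (auto simp: Gamma_eq_zero_iff dest: nonpos_Ints_nonpos)
  have "(Gamma s * 1 / (s * Gamma s) - Gamma s * (s * Gamma s) / Gamma (2 * s + 1)) / s
      = (1 - 1 / (Gamma (2 * s + 1) / (s * Gamma s * (s * Gamma s)))) / s\<^sup>2"
    using s nonzero by (simp add: field_simps power2_eq_square)
  moreover have "s + (s + 1) = 2 * s + 1" "2 * s - s + 1 = s + 1"
    by simp_all
  ultimately show ?thesis
    unfolding Beta_def binom_integrand_def gen_binom_def Gamma_1 by (simp add: Gamma_s1)
qed

lemma binom_integrand_nonneg:
  fixes s :: real
  assumes "0 < s"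
  shows "0 \<le> binom_integrand s"
proof -
  have "Beta s (s + 1) \<le> Beta s 1"
    using assms by (intro Beta_real_mono) auto
  then have "0 \<le> (Beta s 1 - Beta s (s + 1)) / s"
    using assms by simp
  then show ?thesis
    by (simp add: Beta_difference_eq_binom_integrand[OF assms])
qed

lemma nn_integral_binom_integrand:
  fixes s :: real
  assumes s: "0 < s"
  shows "(\<integral>\<^sup>+x. ennreal (x powr (s - 1) * (1 - (1 - x) powr s) / s) * indicator {0<..<1} x \<partial>lborel)
       = ennreal (binom_integrand s)"
proof -
  have Beta: "((\<lambda>t. t powr (s - 1) * (1 - t) powr (b - 1)) has_integral Beta s b) {0<..<1}"
    if "0 < b" for b
    using has_integral_Beta_real[of s b] s that by (simp add: has_integral_Icc_iff_Ioo)
  have "((\<lambda>t. (t powr (s - 1) * (1 - t) powr (1 - 1) - t powr (s - 1) * (1 - t) powr ((s + 1) - 1)) / s)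
          has_integral (Beta s 1 - Beta s (s + 1)) / s) {0<..<1}"
    using s by (intro has_integral_divide has_integral_diff Beta) auto
  moreover have "(t powr (s - 1) * (1 - t) powr (1 - 1) - t powr (s - 1) * (1 - t) powr ((s + 1) - 1)) / s
               = t powr (s - 1) * (1 - (1 - t) powr s) / s" if "t \<in> {0<..<1}" for t
    using that by (simp add: right_diff_distrib)
  ultimately have "((\<lambda>t. t powr (s - 1) * (1 - (1 - t) powr s) / s)
                      has_integral (Beta s 1 - Beta s (s + 1)) / s) {0<..<1}"
    by (subst (asm) has_integral_cong) auto
  then have "((\<lambda>t. t powr (s - 1) * (1 - (1 - t) powr s) / s) has_integral binom_integrand s) {0<..<1}"
    by (simp add: Beta_difference_eq_binom_integrand[OF s])
  moreover have "0 \<le> x powr (s - 1) * (1 - (1 - x) powr s) / s" if "x \<in> {0<..<1}" for x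
  proof -
    have "(1 - x) powr s \<le> 1 powr s"
      using that s by (intro powr_mono2) auto
    then show ?thesis
      using s by simp
  qed
  ultimately show ?thesis
    by (rule nn_integral_has_integral_lebesgue'[rotated])
qed

lemma binom_integrand_borel: "(\<lambda>s. indicator {0<..} s * binom_integrand s) \<in> borel_measurable borel"
proof -
  have "continuous_on {0<..} binom_integrand"
  proof (intro continuous_at_imp_continuous_on ballI)
    fix t :: real
    assume "t \<in> {0<..}"
    then have t: "0 < t"
      by simp
    have "t + 1 \<notin> \<int>\<^sub>\<le>\<^sub>0" "2 * t - t + 1 \<notin> \<int>\<^sub>\<le>\<^sub>0" "2 * t + 1 \<notin> \<int>\<^sub>\<le>\<^sub>0"
      using t by (auto dest!: nonpos_Ints_nonpos)
    moreover have "Gamma (t + 1) \<noteq> 0" "Gamma (2 * t + 1) \<noteq> 0"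
      using t by (auto simp: Gamma_eq_zero_iff dest: nonpos_Ints_nonpos)
    ultimately show "isCont binom_integrand t"
      unfolding binom_integrand_def[abs_def] gen_binom_def
      using t by (intro continuous_intros) auto
  qed
  from borel_measurable_continuous_on_indicator[OF _ this] show ?thesis
    by simp
qed

text \<open>Integrability of the logarithmic integrand: it is bounded by \<open>8 / sqrt (1 - x)\<close>.  The ratio
  \<open>a = ln(1-x)/ln x\<close> is nonnegative; near \<open>0\<close> it is \<open>O(x)\<close>, and near \<open>1\<close> it is at most
  \<open>1/u^2 - 1\<close> with \<open>u = 1 - x\<close>, since \<open>-ln u \<le> 1/u - 1\<close> and \<open>-ln x \<ge> u\<close>.\<close>

lemma log_ratio_nonneg:
  fixes x :: real
  assumes "0 < x" "x < 1"
  shows "0 \<le> ln (1 - x) / ln x"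
  using assms by (simp add: divide_nonpos_neg)

lemma log_integrand_le_near_0:
  fixes x :: real
  assumes x: "0 < x" "x \<le> 1/2"
  shows "log_integrand x \<le> 4"
proof -
  define a where "a = ln (1 - x) / ln x"
  have a0: "0 \<le> a"
    unfolding a_def using x by (intro log_ratio_nonneg) auto
  have "- x - 2 * x\<^sup>2 \<le> ln (1 - x)"
    using ln_one_minus_pos_lower_bound[of x] x by simp
  moreover have "2 * x\<^sup>2 \<le> x"
    using x by (simp add: power2_eq_square mult_right_mono)
  ultimately have "- ln (1 - x) \<le> 2 * x"
    by linarith
  moreover have "1/2 \<le> - ln x"
    using ln_le_minus_one[of x] x by simp
  ultimately have "(- ln (1 - x)) / (- ln x) \<le> (2 * x) / (1/2)"
    using x by (intro frac_le) auto
  then have "ln (1 + a) \<le> 4 * x"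
    using ln_add_one_self_le_self[OF a0] by (simp add: a_def)
  then show ?thesis
    using x by (simp add: log_integrand_def a_def divide_le_eq)
qed

lemma log_integrand_le_near_1:
  fixes x :: real
  assumes x: "1/2 < x" "x < 1"
  shows "log_integrand x \<le> 8 / sqrt (1 - x)"
proof -
  define u where "u = 1 - x"
  define a where "a = ln u / ln x"
  have u: "0 < u" "u < 1"
    using x by (auto simp: u_def)
  have a0: "0 \<le> a"
    unfolding a_def u_def using x by (intro log_ratio_nonneg) auto
  have "- ln u \<le> 1 / u - 1"
    using ln_le_minus_one[of "1 / u"] u by (simp add: ln_div)
  moreover have "u \<le> - ln x"
    using ln_le_minus_one[of x] x by (simp add: u_def)
  ultimately have "(- ln u) / (- ln x) \<le> (1 / u - 1) / u"
    using u by (intro frac_le) auto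
  moreover have "(1 / u - 1) / u = 1 / u\<^sup>2 - 1 / u"
    using u by (simp add: field_simps power2_eq_square)
  moreover have "1 \<le> 1 / u"
    using u by simp
  ultimately have "1 + a \<le> 1 / u\<^sup>2"
    by (simp add: a_def)
  then have "ln (1 + a) \<le> ln (1 / u\<^sup>2)"
    using a0 u by (subst ln_le_cancel_iff) auto
  also have "\<dots> = 4 * ln (1 / sqrt u)"
    using u by (simp add: ln_div ln_sqrt ln_realpow)
  also have "\<dots> \<le> 4 / sqrt u"
    using ln_le_minus_one[of "1 / sqrt u"] u by simp
  finally have "ln (1 + a) \<le> 4 / sqrt u" .
  moreover have "ln (1 + a) / x \<le> ln (1 + a) / (1/2)"
    using x a0 by (intro divide_left_mono) auto
  ultimately show ?thesis
    by (simp add: log_integrand_def a_def u_def)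
qed

lemma log_integrand_bound:
  fixes x :: real
  assumes x: "0 < x" "x < 1"
  shows "0 \<le> log_integrand x \<and> log_integrand x \<le> 8 / sqrt (1 - x)"
proof -
  have "0 \<le> log_integrand x"
    unfolding log_integrand_def using x log_ratio_nonneg[OF x] by simp
  moreover have "log_integrand x \<le> 8 / sqrt (1 - x)"
  proof (cases "x \<le> 1/2")
    case True
    have "0 < sqrt (1 - x)" "sqrt (1 - x) \<le> 1"
      using x by simp_all
    then have "4 \<le> 8 / sqrt (1 - x)"
      by (auto simp: field_simps simp del: real_sqrt_le_1_iff)
    then show ?thesis
      using log_integrand_le_near_0[OF x(1) True] by linarith
  next
    case False
    then show ?thesis
      using log_integrand_le_near_1 x by simp
  qed
  ultimately show ?thesis ..
qed

lemma log_integrand_integrable: "set_integrable lborel {0<..<1} log_integrand"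
proof -
  have "set_integrable lborel {0..1::real} (\<lambda>t. 8 * (t powr (1 - 1) * (1 - t) powr (1/2 - 1)))"
    using integrable_Beta[of 1 "1/2"] by (intro set_integrable_mult_right) auto
  then show ?thesis
    unfolding set_integrable_def
  proof (rule Bochner_Integration.integrable_bound)
    show "(\<lambda>x. indicator {0<..<1::real} x *\<^sub>R log_integrand x) \<in> borel_measurable lborel"
      unfolding log_integrand_def by measurable
    show "AE x in lborel. norm (indicator {0<..<1::real} x *\<^sub>R log_integrand x)
        \<le> norm (indicator {0..1} x *\<^sub>R (8 * (x powr (1 - 1) * (1 - x) powr (1/2 - 1))))"
    proof (rule AE_I2)
      fix x :: real
      show "norm (indicator {0<..<1::real} x *\<^sub>R log_integrand x)
          \<le> norm (indicator {0..1} x *\<^sub>R (8 * (x powr (1 - 1) * (1 - x) powr (1/2 - 1))))"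
      proof (cases "x \<in> {0<..<1}")
        case True
        then have "(1 - x) powr (1/2 - 1) = 1 / sqrt (1 - x)"
          by (simp add: powr_minus_divide powr_half_sqrt flip: powr_minus)
        then show ?thesis
          using log_integrand_bound[of x] True by auto
      qed auto
    qed
  qed
qed

lemma nn_integral_Im1_eq_log:
  "(\<integral>\<^sup>+p. ennreal (Im1_integrand p) * indicator regionT p \<partial>lborel)
 = (\<integral>\<^sup>+x. ennreal (log_integrand x) * indicator {0<..<1} x \<partial>lborel)"
proof -
  have meas: "(\<lambda>p. ennreal (Im1_integrand p)) \<in> borel_measurable (lborel \<Otimes>\<^sub>M lborel)"
    by measurable
  show ?thesis
    unfolding nn_integral_regionT[OF meas]
  proof (rule nn_integral_cong)
    fix x :: real
    show "(\<integral>\<^sup>+y. ennreal (Im1_integrand (x, y)) * indicator {1 - x..1} y \<partial>lborel) * indicator {0<..<1} x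
        = ennreal (log_integrand x) * indicator {0<..<1} x"
      by (cases "x \<in> {0<..<1}") (simp_all add: slice_integral_Im1)
  qed
qed

text \<open>Second reduction: the exponential representation and Tonelli turn \<open>I_{-1}\<close> into the
  integral of \<open>binom_integrand\<close>.\<close>

lemma nn_integral_Im1_eq_binom:
  "(\<integral>\<^sup>+p. ennreal (Im1_integrand p) * indicator regionT p \<partial>lborel)
 = (\<integral>\<^sup>+s. ennreal (binom_integrand s) * indicator {0<..} s \<partial>lborel)"
proof -
  define f where "f p s = ennreal ((fst p * snd p) powr (s - 1)) * indicator regionT p * indicator {0<..} s"
    for p :: "real \<times> real" and s :: real
  have f_meas: "case_prod f \<in> borel_measurable ((lborel :: (real \<times> real) measure) \<Otimes>\<^sub>M lborel)"
  proof -
    have "case_prod f \<in> borel_measurable ((lborel \<Otimes>\<^sub>M lborel) \<Otimes>\<^sub>M lborel)"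
      unfolding f_def by measurable
    then show ?thesis
      by (simp add: lborel_prod)
  qed
  have "(\<integral>\<^sup>+p. ennreal (Im1_integrand p) * indicator regionT p \<partial>lborel) = (\<integral>\<^sup>+p. \<integral>\<^sup>+s. f p s \<partial>lborel \<partial>lborel)"
    by (intro nn_integral_cong_AE eventually_mono[OF AE_lborel_singleton[of "(1, 1)"]])
       (auto simp: f_def indicator_def Im1_integrand_as_integral)
  also have "\<dots> = (\<integral>\<^sup>+s. \<integral>\<^sup>+p. f p s \<partial>lborel \<partial>lborel)"
    using lborel_pair.Fubini'[OF f_meas] by simp
  also have "\<dots> = (\<integral>\<^sup>+s. ennreal (binom_integrand s) * indicator {0<..} s \<partial>lborel)"
  proof (rule nn_integral_cong)
    fix s :: real
    have meas: "(\<lambda>p. ennreal ((fst p * snd p) powr (s - 1))) \<in> borel_measurable (lborel \<Otimes>\<^sub>M lborel)"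
      by measurable
    have "(\<integral>\<^sup>+p. f p s \<partial>lborel)
        = (\<integral>\<^sup>+p. ennreal ((fst p * snd p) powr (s - 1)) * indicator regionT p \<partial>lborel) * indicator {0<..} s"
      unfolding f_def by (rule nn_integral_multc) (simp only: lborel_prod[symmetric], measurable)
    also have "\<dots> = ennreal (binom_integrand s) * indicator {0<..} s"
    proof (cases "0 < s")
      case s: True
      have "(\<integral>\<^sup>+p. ennreal ((fst p * snd p) powr (s - 1)) * indicator regionT p \<partial>lborel)
          = (\<integral>\<^sup>+x. ennreal (x powr (s - 1) * (1 - (1 - x) powr s) / s) * indicator {0<..<1} x \<partial>lborel)"
        unfolding nn_integral_regionT[OF meas] prod.sel
      proof (rule nn_integral_cong)
        fix x :: real
        show "(\<integral>\<^sup>+y. ennreal ((x * y) powr (s - 1)) * indicator {1 - x..1} y \<partial>lborel) * indicator {0<..<1} x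
            = ennreal (x powr (s - 1) * (1 - (1 - x) powr s) / s) * indicator {0<..<1} x"
          by (cases "x \<in> {0<..<1}") (simp_all add: slice_integral_powr s)
      qed
      then show ?thesis
        using nn_integral_binom_integrand[OF s] by simp
    qed simp
    finally show "(\<integral>\<^sup>+p. f p s \<partial>lborel) = ennreal (binom_integrand s) * indicator {0<..} s" .
  qed
  finally show ?thesis .
qed

lemma set_integrable_iff_nn_integral:
  fixes f :: "'a \<Rightarrow> real"
  assumes "(\<lambda>x. indicator A x * f x) \<in> borel_measurable M" "\<And>x. x \<in> A \<Longrightarrow> 0 \<le> f x" "0 \<le> r"
  shows "(set_integrable M A f \<and> (LINT x:A|M. f x) = r)
     \<longleftrightarrow> (\<integral>\<^sup>+x. ennreal (f x) * indicator A x \<partial>M) = ennreal r"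
proof -
  have "(\<integral>\<^sup>+x. ennreal (f x) * indicator A x \<partial>M) = (\<integral>\<^sup>+x. ennreal (indicator A x * f x) \<partial>M)"
    by (intro nn_integral_cong) (simp add: indicator_def)
  moreover have "AE x in M. 0 \<le> indicator A x * f x"
    using assms(2) by (intro AE_I2) (simp add: indicator_def)
  ultimately show ?thesis
    using nn_integral_eq_integrable[OF assms(1) _ assms(3)]
    by (simp add: set_integrable_def set_lebesgue_integral_def)
qed

theorem proposition1:
  shows "set_integrable lborel regionT Im1_integrand
    \<and> set_integrable lborel {0<..} (\<lambda>t::real. (1 - 1 / gen_binom (2 * t) t) / t\<^sup>2)
    \<and> set_integrable lborel {0<..<1} (\<lambda>x::real. ln (1 + ln (1 - x) / ln x) / x)
    \<and> (LINT p:regionT|lborel. Im1_integrand p)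
           = (LINT t:{0<..}|lborel. (1 - 1 / gen_binom (2 * t) t) / t\<^sup>2)
    \<and> (LINT t:{0<..}|lborel. (1 - 1 / gen_binom (2 * t) t) / t\<^sup>2)
           = (LINT x:{0<..<1}|lborel. ln (1 + ln (1 - x) / ln x) / x)"
proof -
  define r where "r = (LINT x:{0<..<1}|lborel. log_integrand x)"
  have log_nonneg: "\<And>x. x \<in> {0<..<1} \<Longrightarrow> 0 \<le> log_integrand x"
    using log_integrand_bound by auto
  have "r \<ge> 0"
    unfolding r_def set_lebesgue_integral_def
    by (intro integral_nonneg_AE AE_I2) (simp add: indicator_def log_nonneg)
  have "(\<lambda>p. indicator regionT p * Im1_integrand p) \<in> borel_measurable (lborel \<Otimes>\<^sub>M lborel)"
    by measurable
  then have Im1_meas: "(\<lambda>p. indicator regionT p * Im1_integrand p) \<in> borel_measurable lborel"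
    by (simp add: lborel_prod)
  have log_meas: "(\<lambda>x. indicator {0<..<1} x * log_integrand x) \<in> borel_measurable lborel"
    unfolding log_integrand_def by measurable
  note iff = set_integrable_iff_nn_integral[OF _ _ \<open>r \<ge> 0\<close>]
  have "(\<integral>\<^sup>+x. ennreal (log_integrand x) * indicator {0<..<1} x \<partial>lborel) = ennreal r"
    using iff[OF log_meas log_nonneg] log_integrand_integrable r_def by simp
  then have Im1: "set_integrable lborel regionT Im1_integrand \<and> (LINT p:regionT|lborel. Im1_integrand p) = r"
    and binom: "set_integrable lborel {0<..} binom_integrand \<and> (LINT t:{0<..}|lborel. binom_integrand t) = r"
    using iff[of regionT Im1_integrand] iff[of "{0<..}" binom_integrand]
      Im1_meas Im1_integrand_nonneg binom_integrand_nonneg binom_integrand_borel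
      nn_integral_Im1_eq_log nn_integral_Im1_eq_binom
    by (auto simp: indicator_def)
  show ?thesis
    using Im1 binom log_integrand_integrable r_def
    unfolding binom_integrand_def[abs_def] log_integrand_def[abs_def] by simp
qed

end
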